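(* Let $G$ be a compact Lie group with normalized Haar measure, let $\Gamma$ be any finite graph with vertex set $\{1,\ldots,k\}$ that is a subgraph of the complete graph on $k$ vertices (no loops or multiple edges), and assign to each edge $e=\{i,j\}$, $i<j$, a finite-dimensional unitary representation $\rho_e$ of $G$. Then the evaluation of the corresponding relativistic spin network with symmetry $G\times G$, $$\int_{G^k}\prod_{e=\{i,j\},\,i<j}\chi_{\rho_e}(g_i g_j^{-1})\,dg_1\cdots dg_k,$$ is a non-negative real number. In particular, this holds for the relativistic (Barrett–Crane) spin networks with symmetry group $\mathrm{Spin}(4)\cong SU(2)\times SU(2)$ (or $SO(4)$) on any such graph.
   Context: $\chi_\rho(g)=\mathrm{tr}\,\rho(g)$. A relativistic spin network with symmetry $G\times G$ is a graph whose edges are labeled by representations of $G\times G$ of the form $V\otimes V^\ast$ ($V$ a representation of $G$) and whose vertices are labeled by the intertwiner given by a single integration over $G$ (the integral presentation of the Barrett–Crane intertwiner, $\int_G \bigotimes_{e\ni v}\rho_e(g)\,dg$ with the edge factors $V_e$, resp. $V_e^\ast$, at the two ends of the edge); with these conventions, contracting the intertwiners along the edges yields exactly the integral displayed in the claim, where $\rho_e$ is the representation $V$ labeling edge $e$. For $G=SU(2)$, the balanced representations $V\otimes V$ of $\mathrm{Spin}(4)$ are isomorphic to $V\otimes V^\ast$. *)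

theory Defs
  imports "HOL-Analysis.Analysis" "HOL-Probability.Probability" "HOL-Algebra.Group"
    "Jordan_Normal_Form.Schur_Decomposition"
begin

definition topological_group :: "('g, 'b) monoid_scheme \<Rightarrow> 'g topology \<Rightarrow> bool" where
  "topological_group G T \<longleftrightarrow>
     group G \<and> topspace T = carrier G \<and> Hausdorff_space T \<and>
     continuous_map (prod_topology T T) T (\<lambda>p. fst p \<otimes>\<^bsub>G\<^esub> snd p) \<and>
     continuous_map T T (\<lambda>x. inv\<^bsub>G\<^esub> x)"

definition compact_group :: "('g, 'b) monoid_scheme \<Rightarrow> 'g topology \<Rightarrow> bool" where
  "compact_group G T \<longleftrightarrow> topological_group G T \<and> compact_space T"

definition unitary_rep ::
  "('g, 'b) monoid_scheme \<Rightarrow> 'g topology \<Rightarrow> nat \<Rightarrow> ('g \<Rightarrow> complex mat) \<Rightarrow> bool" where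
  "unitary_rep G T d \<rho> \<longleftrightarrow>
     (\<forall>g\<in>carrier G. \<rho> g \<in> carrier_mat d d \<and> mat_adjoint (\<rho> g) * \<rho> g = 1\<^sub>m d) \<and>
     (\<forall>g\<in>carrier G. \<forall>h\<in>carrier G. \<rho> (g \<otimes>\<^bsub>G\<^esub> h) = \<rho> g * \<rho> h) \<and>
     (\<forall>i<d. \<forall>j<d. continuous_map T euclidean (\<lambda>g. \<rho> g $$ (i, j)))"

text \<open>Compact Lie group: a compact group admitting a faithful continuous finite-dimensional
  unitary representation (equivalently, isomorphic as a topological group to a closed
  subgroup of some U(n)).\<close>
definition compact_lie_group :: "('g, 'b) monoid_scheme \<Rightarrow> 'g topology \<Rightarrow> bool" where
  "compact_lie_group G T \<longleftrightarrow>
     compact_group G T \<and> (\<exists>n \<rho>. unitary_rep G T n \<rho> \<and> inj_on \<rho> (carrier G))"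

definition normalized_haar :: "('g, 'b) monoid_scheme \<Rightarrow> 'g topology \<Rightarrow> 'g measure \<Rightarrow> bool" where
  "normalized_haar G T M \<longleftrightarrow>
     prob_space M \<and> space M = carrier G \<and>
     sets M = sigma_sets (carrier G) {U. openin T U} \<and>
     (\<forall>g\<in>carrier G. \<forall>A\<in>sets M.
        emeasure M ((\<lambda>x. g \<otimes>\<^bsub>G\<^esub> x) ` A) = emeasure M A)"

definition mat_trace :: "complex mat \<Rightarrow> complex" where
  "mat_trace A = (\<Sum>i<dim_row A. A $$ (i, i))"

definition character :: "('g \<Rightarrow> complex mat) \<Rightarrow> 'g \<Rightarrow> complex" where
  "character \<rho> g = mat_trace (\<rho> g)"

end

theory Submission
  imports Defs
begin

(* Expanding each character as chi(g h^-1) = sum_{p,q} rho(g)_pq conj(rho(h)_pq) and grouping the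
  factors by vertex turns the integrand into sum_{a,b} prod_i F_i(a,b)(g_i), where F_i are the matrix
  coefficients of the tensor product at vertex i of the representations rho_e (e leaving i) and their
  conjugates (e entering i). By Fubini the integral is sum_{a,b} prod_i P_i(a,b) with P_i the Haar
  average of F_i, and invariance of Haar measure makes P_i an orthogonal projection: P_i = P_i^* P_i.
  An entrywise product of such Gram kernels is again a Gram kernel, and the sum of all entries of a
  Gram kernel, sum_{a,b} sum_c conj(V_ca) V_cb = sum_c |sum_a V_ca|^2, is non-negative. *)

lemma mat_adjoint_carrier: "A \<in> carrier_mat n n \<Longrightarrow> mat_adjoint A \<in> carrier_mat n n"
  unfolding mat_adjoint_def by auto

lemma mat_adjoint_index:
  "A \<in> carrier_mat n n \<Longrightarrow> i < n \<Longrightarrow> j < n \<Longrightarrow> mat_adjoint A $$ (i, j) = cnj (A $$ (j, i))"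
  unfolding mat_adjoint_def by (auto simp: mat_of_rows_index)

lemma unitary_rep_one:
  assumes "group G" "unitary_rep G T d \<rho>"
  shows "\<rho> \<one>\<^bsub>G\<^esub> = 1\<^sub>m d"
proof -
  interpret group G by fact
  let ?P = "\<rho> \<one>\<^bsub>G\<^esub>"
  have P: "?P \<in> carrier_mat d d" "mat_adjoint ?P * ?P = 1\<^sub>m d"
    using assms(2) unfolding unitary_rep_def by auto
  have idem: "?P = ?P * ?P"
    using assms(2) unfolding unitary_rep_def by (metis one_closed l_one)
  have "1\<^sub>m d = mat_adjoint ?P * (?P * ?P)" using P idem by simp
  also have "\<dots> = (mat_adjoint ?P * ?P) * ?P"
    using mat_adjoint_carrier[OF P(1)] P(1) by (simp add: assoc_mult_mat)
  also have "\<dots> = ?P" using P by simp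
  finally show ?thesis by simp
qed

lemma unitary_rep_inv:
  assumes "group G" "unitary_rep G T d \<rho>" "h \<in> carrier G"
  shows "\<rho> (inv\<^bsub>G\<^esub> h) = mat_adjoint (\<rho> h)"
proof -
  interpret group G by fact
  have P: "\<rho> h \<in> carrier_mat d d" "mat_adjoint (\<rho> h) * \<rho> h = 1\<^sub>m d"
    "\<rho> (inv\<^bsub>G\<^esub> h) \<in> carrier_mat d d"
    using assms unfolding unitary_rep_def by auto
  have right_inv: "\<rho> h * \<rho> (inv\<^bsub>G\<^esub> h) = 1\<^sub>m d"
    using assms unitary_rep_one[OF assms(1,2)] unfolding unitary_rep_def by (metis inv_closed r_inv)
  have "mat_adjoint (\<rho> h) = mat_adjoint (\<rho> h) * (\<rho> h * \<rho> (inv\<^bsub>G\<^esub> h))"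
    using right_inv mat_adjoint_carrier[OF P(1)] by simp
  also have "\<dots> = (mat_adjoint (\<rho> h) * \<rho> h) * \<rho> (inv\<^bsub>G\<^esub> h)"
    by (rule assoc_mult_mat[symmetric, OF mat_adjoint_carrier[OF P(1)] P(1) P(3)])
  also have "\<dots> = \<rho> (inv\<^bsub>G\<^esub> h)" using P by simp
  finally show ?thesis by simp
qed

text \<open>Matrix coefficients, in the basis \<open>J\<close>, of a continuous unitary representation on
  \<open>\<complex>\<^sup>J\<close>; the value at \<open>\<one>\<close> is only required to be a projection, not the identity.\<close>
definition unitary_coeffs ::
  "('g, 'b) monoid_scheme \<Rightarrow> 'g topology \<Rightarrow> 'j set \<Rightarrow> ('j \<Rightarrow> 'j \<Rightarrow> 'g \<Rightarrow> complex) \<Rightarrow> bool" where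
  "unitary_coeffs G T J F \<longleftrightarrow>
     (\<forall>a\<in>J. \<forall>b\<in>J. \<forall>g\<in>carrier G. \<forall>h\<in>carrier G.
        F a b (g \<otimes>\<^bsub>G\<^esub> h) = (\<Sum>c\<in>J. F a c g * F c b h)) \<and>
     (\<forall>a\<in>J. \<forall>b\<in>J. \<forall>g\<in>carrier G. F a b (inv\<^bsub>G\<^esub> g) = cnj (F b a g)) \<and>
     (\<forall>a\<in>J. \<forall>b\<in>J. continuous_map T euclidean (F a b))"

lemma
  assumes "unitary_coeffs G T J F" "a \<in> J" "b \<in> J"
  shows unitary_coeffs_mult:
      "\<lbrakk>g \<in> carrier G; h \<in> carrier G\<rbrakk> \<Longrightarrow> F a b (g \<otimes>\<^bsub>G\<^esub> h) = (\<Sum>c\<in>J. F a c g * F c b h)"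
    and unitary_coeffs_inv: "g \<in> carrier G \<Longrightarrow> F a b (inv\<^bsub>G\<^esub> g) = cnj (F b a g)"
    and unitary_coeffs_continuous: "continuous_map T euclidean (F a b)"
  using assms unfolding unitary_coeffs_def by auto

lemma unitary_rep_coeffs:
  assumes "group G" "unitary_rep G T d \<rho>"
  shows "unitary_coeffs G T {..<d} (\<lambda>p q g. \<rho> g $$ (p, q))"
proof -
  have carrier: "\<And>g. g \<in> carrier G \<Longrightarrow> \<rho> g \<in> carrier_mat d d"
    using assms(2) unfolding unitary_rep_def by auto
  have "\<rho> (g \<otimes>\<^bsub>G\<^esub> h) $$ (p, q) = (\<Sum>r<d. \<rho> g $$ (p, r) * \<rho> h $$ (r, q))"
    if "g \<in> carrier G" "h \<in> carrier G" "p < d" "q < d" for g h p q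
  proof -
    have "\<rho> (g \<otimes>\<^bsub>G\<^esub> h) = \<rho> g * \<rho> h"
      using assms(2) that unfolding unitary_rep_def by blast
    then show ?thesis
      using that carrier[OF that(1)] carrier[OF that(2)] by (simp add: scalar_prod_def atLeast0LessThan)
  qed
  moreover have "\<rho> (inv\<^bsub>G\<^esub> g) $$ (p, q) = cnj (\<rho> g $$ (q, p))"
    if "g \<in> carrier G" "p < d" "q < d" for g p q
    using that by (simp add: unitary_rep_inv[OF assms] mat_adjoint_index[OF carrier])
  ultimately show ?thesis
    using assms(2) unfolding unitary_coeffs_def unitary_rep_def by auto
qed

lemma character_mult_inv:
  assumes "group G" "unitary_rep G T d \<rho>" "x \<in> carrier G" "y \<in> carrier G"
  shows "character \<rho> (x \<otimes>\<^bsub>G\<^esub> inv\<^bsub>G\<^esub> y) = (\<Sum>p<d. \<Sum>q<d. \<rho> x $$ (p, q) * cnj (\<rho> y $$ (p, q)))"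
proof -
  interpret group G by fact
  have "x \<otimes>\<^bsub>G\<^esub> inv\<^bsub>G\<^esub> y \<in> carrier G" using assms(3,4) by simp
  then have "\<rho> (x \<otimes>\<^bsub>G\<^esub> inv\<^bsub>G\<^esub> y) \<in> carrier_mat d d"
    using assms(2) unfolding unitary_rep_def by blast
  then show ?thesis
    using unitary_rep_coeffs[OF assms(1,2)] assms(3,4)
    unfolding character_def mat_trace_def unitary_coeffs_def by auto
qed

lemma unitary_coeffs_cnj:
  assumes "unitary_coeffs G T J F"
  shows "unitary_coeffs G T J (\<lambda>a b g. cnj (F a b g))"
  using assms unfolding unitary_coeffs_def by (simp add: continuous_map_atin tendsto_cnj)

definition tensor_coeffs ::
  "'s set \<Rightarrow> ('s \<Rightarrow> 'j \<Rightarrow> 'j \<Rightarrow> 'g \<Rightarrow> complex) \<Rightarrow> ('s \<Rightarrow> 'j) \<Rightarrow> ('s \<Rightarrow> 'j) \<Rightarrow> 'g \<Rightarrow> complex" where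
  "tensor_coeffs S F a b g = (\<Prod>s\<in>S. F s (a s) (b s) g)"

lemma tensor_coeffs_restrict:
  "tensor_coeffs S F (restrict a S) (restrict b S) = tensor_coeffs S F a b"
  unfolding tensor_coeffs_def by (intro ext prod.cong) auto

lemma unitary_coeffs_tensor:
  assumes "finite S" "\<And>s. s \<in> S \<Longrightarrow> finite (J s)" "\<And>s. s \<in> S \<Longrightarrow> unitary_coeffs G T (J s) (F s)"
  shows "unitary_coeffs G T (PiE S J) (tensor_coeffs S F)"
  unfolding unitary_coeffs_def
proof (intro conjI ballI)
  fix a b g h assume ab: "a \<in> PiE S J" "b \<in> PiE S J" and gh: "g \<in> carrier G" "h \<in> carrier G"
  have "tensor_coeffs S F a b (g \<otimes>\<^bsub>G\<^esub> h) = (\<Prod>s\<in>S. \<Sum>c\<in>J s. F s (a s) c g * F s c (b s) h)"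
    unfolding tensor_coeffs_def
    using assms(3) ab gh by (intro prod.cong refl unitary_coeffs_mult) auto
  also have "\<dots> = (\<Sum>c\<in>PiE S J. \<Prod>s\<in>S. F s (a s) (c s) g * F s (c s) (b s) h)"
    using assms(1,2) by (rule prod_sum_PiE)
  finally show "tensor_coeffs S F a b (g \<otimes>\<^bsub>G\<^esub> h)
      = (\<Sum>c\<in>PiE S J. tensor_coeffs S F a c g * tensor_coeffs S F c b h)"
    by (simp add: tensor_coeffs_def prod.distrib)
next
  fix a b g assume "a \<in> PiE S J" "b \<in> PiE S J" "g \<in> carrier G"
  then show "tensor_coeffs S F a b (inv\<^bsub>G\<^esub> g) = cnj (tensor_coeffs S F b a g)"
    using assms(3) unfolding tensor_coeffs_def cnj_prod
    by (intro prod.cong refl unitary_coeffs_inv) auto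
next
  fix a b assume "a \<in> PiE S J" "b \<in> PiE S J"
  then have "\<And>s. s \<in> S \<Longrightarrow> continuous_map T euclidean (F s (a s) (b s))"
    using assms(3) by (auto intro: unitary_coeffs_continuous)
  then show "continuous_map T euclidean (tensor_coeffs S F a b)"
    unfolding tensor_coeffs_def[abs_def] using assms(1)
    by (simp add: continuous_map_atin tendsto_prod)
qed

locale compact_haar =
  fixes G :: "('g, 'b) monoid_scheme" and T :: "'g topology" and M :: "'g measure"
  assumes compact_group: "compact_group G T"
    and haar: "normalized_haar G T M"
begin

lemma group: "group G"
  and topspace_eq: "topspace T = carrier G"
  and space_eq: "space M = carrier G"
  and sets_eq: "sets M = sigma_sets (carrier G) {U. openin T U}"
  using compact_group haar
  unfolding compact_group_def topological_group_def normalized_haar_def by auto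

sublocale prob_space M
  using haar unfolding normalized_haar_def by auto

lemma borel_measurable_continuous_map:
  fixes f :: "'g \<Rightarrow> 'c::topological_space"
  assumes "continuous_map T euclidean f"
  shows "f \<in> borel_measurable M"
proof (rule borel_measurableI)
  fix S :: "'c set" assume "open S"
  then have "openin T {x \<in> topspace T. f x \<in> S}"
    using assms by (simp add: continuous_map_def)
  moreover have "f -` S \<inter> space M = {x \<in> topspace T. f x \<in> S}"
    using space_eq topspace_eq by auto
  ultimately show "f -` S \<inter> space M \<in> sets M" unfolding sets_eq by auto
qed

lemma integrable_continuous_map:
  fixes f :: "'g \<Rightarrow> 'c::{banach, second_countable_topology}"
  assumes f: "continuous_map T euclidean f"
  shows "integrable M f"
proof -
  have "compact (f ` topspace T)"
    using compact_group f image_compactin[of T "topspace T" euclidean f]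
    by (simp add: compact_group_def compact_space_def)
  then obtain B where "\<forall>x\<in>topspace T. norm (f x) \<le> B"
    using compact_imp_bounded bounded_iff by (metis image_eqI)
  then show ?thesis
    using topspace_eq space_eq
    by (intro integrable_const_bound[where B = B] borel_measurable_continuous_map f) auto
qed

lemma measurable_left_translate:
  assumes h: "h \<in> carrier G"
  shows "(\<lambda>x. h \<otimes>\<^bsub>G\<^esub> x) \<in> measurable M M"
proof (rule measurable_sigma_sets[OF sets_eq])
  have "continuous_map T (prod_topology T T) (\<lambda>x. (h, x))"
    using h topspace_eq by (simp add: continuous_map_paired)
  then have cont: "continuous_map T T (\<lambda>x. h \<otimes>\<^bsub>G\<^esub> x)"
    using compact_group continuous_map_compose
    unfolding compact_group_def topological_group_def by (fastforce simp: o_def)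
  show "{U. openin T U} \<subseteq> Pow (carrier G)"
    using openin_subset topspace_eq by auto
  show "(\<lambda>x. h \<otimes>\<^bsub>G\<^esub> x) \<in> space M \<rightarrow> carrier G"
    using h space_eq group by (auto intro: group.is_monoid monoid.m_closed)
  fix U assume "U \<in> {U. openin T U}"
  then have "openin T {x \<in> topspace T. h \<otimes>\<^bsub>G\<^esub> x \<in> U}"
    using cont by (simp add: continuous_map_def)
  moreover have "(\<lambda>x. h \<otimes>\<^bsub>G\<^esub> x) -` U \<inter> space M = {x \<in> topspace T. h \<otimes>\<^bsub>G\<^esub> x \<in> U}"
    using space_eq topspace_eq by auto
  ultimately show "(\<lambda>x. h \<otimes>\<^bsub>G\<^esub> x) -` U \<inter> space M \<in> sets M" unfolding sets_eq by auto
qed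

lemma distr_left_translate:
  assumes h: "h \<in> carrier G"
  shows "distr M M (\<lambda>x. h \<otimes>\<^bsub>G\<^esub> x) = M"
proof (rule measure_eqI)
  interpret group G by (rule group)
  fix A assume "A \<in> sets (distr M M (\<lambda>x. h \<otimes>\<^bsub>G\<^esub> x))"
  then have A: "A \<in> sets M" "A \<subseteq> carrier G"
    using sets.sets_into_space space_eq by auto
  have "(\<lambda>x. h \<otimes>\<^bsub>G\<^esub> x) -` A \<inter> space M = (\<lambda>x. inv\<^bsub>G\<^esub> h \<otimes>\<^bsub>G\<^esub> x) ` A"
    using h A(2) space_eq
    by (auto simp flip: m_assoc intro!: rev_image_eqI[where x = "h \<otimes>\<^bsub>G\<^esub> x" for x])
  then show "emeasure (distr M M (\<lambda>x. h \<otimes>\<^bsub>G\<^esub> x)) A = emeasure M A"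
    using A h haar measurable_left_translate[OF h]
    by (simp add: emeasure_distr normalized_haar_def)
qed simp

lemma integral_left_translate:
  fixes f :: "'g \<Rightarrow> 'c::{banach, second_countable_topology}"
  assumes "h \<in> carrier G" "f \<in> borel_measurable M"
  shows "(\<integral>x. f (h \<otimes>\<^bsub>G\<^esub> x) \<partial>M) = integral\<^sup>L M f"
  using integral_distr[OF measurable_left_translate assms(2)] distr_left_translate assms(1) by simp

text \<open>The Haar average \<open>P\<close> of a unitary representation is the orthogonal projection onto its
  invariant vectors, so \<open>P = P\<^sup>* P\<close>.\<close>
lemma unitary_coeffs_integral_gram:
  assumes J: "finite J" and F: "unitary_coeffs G T J F" and a: "a \<in> J" and b: "b \<in> J"
  shows "(\<integral>g. F a b g \<partial>M) = (\<Sum>c\<in>J. cnj (\<integral>g. F c a g \<partial>M) * (\<integral>g. F c b g \<partial>M))"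
proof -
  interpret group G by (rule group)
  have int: "\<And>a b. a \<in> J \<Longrightarrow> b \<in> J \<Longrightarrow> integrable M (F a b)"
    using F by (intro integrable_continuous_map unitary_coeffs_continuous)
  have "(\<integral>g. F a b g \<partial>M) = (\<integral>h. (\<integral>g. F a b g \<partial>M) \<partial>M)"
    by (simp add: prob_space)
  also have "\<dots> = (\<integral>h. (\<integral>g. F a b (inv\<^bsub>G\<^esub> h \<otimes>\<^bsub>G\<^esub> g) \<partial>M) \<partial>M)"
    by (rule Bochner_Integration.integral_cong[OF refl])
      (simp add: space_eq integral_left_translate[where f = "F a b"] borel_measurable_integrable int a b)
  also have "\<dots> = (\<integral>h. (\<Sum>c\<in>J. cnj (F c a h) * (\<integral>g. F c b g \<partial>M)) \<partial>M)"
  proof (intro Bochner_Integration.integral_cong refl)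
    fix h assume "h \<in> space M"
    then have h: "h \<in> carrier G" using space_eq by simp
    have "(\<integral>g. F a b (inv\<^bsub>G\<^esub> h \<otimes>\<^bsub>G\<^esub> g) \<partial>M) = (\<integral>g. (\<Sum>c\<in>J. cnj (F c a h) * F c b g) \<partial>M)"
      using F a b h space_eq
      by (intro Bochner_Integration.integral_cong refl) (simp add: unitary_coeffs_mult unitary_coeffs_inv)
    also have "\<dots> = (\<Sum>c\<in>J. cnj (F c a h) * (\<integral>g. F c b g \<partial>M))"
      using int b by (simp add: Bochner_Integration.integral_sum)
    finally show "(\<integral>g. F a b (inv\<^bsub>G\<^esub> h \<otimes>\<^bsub>G\<^esub> g) \<partial>M)
        = (\<Sum>c\<in>J. cnj (F c a h) * (\<integral>g. F c b g \<partial>M))" .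
  qed
  also have "\<dots> = (\<Sum>c\<in>J. cnj (\<integral>g. F c a g \<partial>M) * (\<integral>g. F c b g \<partial>M))"
    using int a by (simp add: Bochner_Integration.integral_sum integral_cnj)
  finally show ?thesis .
qed

end

lemma sum_prod_gram_kernels:
  fixes V :: "'i \<Rightarrow> 'c \<Rightarrow> 'a \<Rightarrow> complex"
  assumes A: "finite A" and I: "finite I" and C: "\<And>i. i \<in> I \<Longrightarrow> finite (C i)"
    and K: "\<And>i a b. i \<in> I \<Longrightarrow> a \<in> A \<Longrightarrow> b \<in> A \<Longrightarrow> K i a b = (\<Sum>c\<in>C i. cnj (V i c a) * V i c b)"
  shows "(\<Sum>a\<in>A. \<Sum>b\<in>A. \<Prod>i\<in>I. K i a b)
    = of_real (\<Sum>\<gamma>\<in>PiE I C. (cmod (\<Sum>a\<in>A. \<Prod>i\<in>I. V i (\<gamma> i) a))\<^sup>2)"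
proof -
  let ?U = "\<lambda>\<gamma> a. \<Prod>i\<in>I. V i (\<gamma> i) a"
  have "(\<Sum>a\<in>A. \<Sum>b\<in>A. \<Prod>i\<in>I. K i a b) = (\<Sum>a\<in>A. \<Sum>b\<in>A. \<Prod>i\<in>I. \<Sum>c\<in>C i. cnj (V i c a) * V i c b)"
    using K by (intro sum.cong prod.cong refl) auto
  also have "\<dots> = (\<Sum>a\<in>A. \<Sum>b\<in>A. \<Sum>\<gamma>\<in>PiE I C. cnj (?U \<gamma> a) * ?U \<gamma> b)"
    using I C by (simp add: prod_sum_PiE prod.distrib cnj_prod)
  also have "\<dots> = (\<Sum>a\<in>A. \<Sum>\<gamma>\<in>PiE I C. \<Sum>b\<in>A. cnj (?U \<gamma> a) * ?U \<gamma> b)"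
    by (intro sum.cong refl) (rule sum.swap)
  also have "\<dots> = (\<Sum>\<gamma>\<in>PiE I C. \<Sum>a\<in>A. \<Sum>b\<in>A. cnj (?U \<gamma> a) * ?U \<gamma> b)"
    by (rule sum.swap)
  also have "\<dots> = (\<Sum>\<gamma>\<in>PiE I C. cnj (\<Sum>a\<in>A. ?U \<gamma> a) * (\<Sum>a\<in>A. ?U \<gamma> a))"
    by (simp add: sum_product cnj_sum)
  also have "\<dots> = of_real (\<Sum>\<gamma>\<in>PiE I C. (cmod (\<Sum>a\<in>A. ?U \<gamma> a))\<^sup>2)"
    unfolding of_real_sum by (intro sum.cong refl) (simp only: complex_norm_square mult.commute)
  finally show ?thesis .
qed

lemma prod_sum_sum_PiE:
  fixes f :: "'e \<Rightarrow> 'p \<Rightarrow> 'q \<Rightarrow> 'c::comm_semiring_1"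
  assumes "finite E" "\<And>e. e \<in> E \<Longrightarrow> finite (P e)" "\<And>e. e \<in> E \<Longrightarrow> finite (Q e)"
  shows "(\<Prod>e\<in>E. \<Sum>p\<in>P e. \<Sum>q\<in>Q e. f e p q)
    = (\<Sum>a\<in>PiE E P. \<Sum>b\<in>PiE E Q. \<Prod>e\<in>E. f e (a e) (b e))"
proof -
  have "(\<Prod>e\<in>E. \<Sum>p\<in>P e. \<Sum>q\<in>Q e. f e p q) = (\<Sum>a\<in>PiE E P. \<Prod>e\<in>E. \<Sum>q\<in>Q e. f e (a e) q)"
    using assms(1,2) by (rule prod_sum_PiE)
  also have "\<dots> = (\<Sum>a\<in>PiE E P. \<Sum>b\<in>PiE E Q. \<Prod>e\<in>E. f e (a e) (b e))"
    using assms(1,3) by (intro sum.cong refl prod_sum_PiE)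
  finally show ?thesis .
qed

lemma finite_edges:
  assumes "finite V" "E \<subseteq> {(i, j). i \<in> V \<and> j \<in> V \<and> i \<noteq> j}"
  shows "finite E"
proof -
  have "E \<subseteq> V \<times> V" using assms(2) by auto
  then show ?thesis by (rule finite_subset) (simp add: assms(1))
qed

definition incident_edges :: "('v \<times> 'v) set \<Rightarrow> 'v \<Rightarrow> ('v \<times> 'v) set" where
  "incident_edges E i = {e \<in> E. fst e = i \<or> snd e = i}"

lemma restrict_incident_edges_PiE:
  "a \<in> PiE E J \<Longrightarrow> restrict a (incident_edges E i) \<in> PiE (incident_edges E i) J"
  by (auto simp: restrict_PiE_iff incident_edges_def)

lemma prod_edges_eq_prod_incident_edges:
  assumes V: "finite V" and E: "E \<subseteq> {(i, j). i \<in> V \<and> j \<in> V \<and> i \<noteq> j}"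
  shows "(\<Prod>e\<in>E. f e (fst e) * f e (snd e)) = (\<Prod>i\<in>V. \<Prod>e\<in>incident_edges E i. f e i)"
proof -
  have "finite E" using V E by (rule finite_edges)
  have "(\<Prod>i\<in>V. \<Prod>e\<in>incident_edges E i. f e i) = (\<Prod>i\<in>V. \<Prod>e\<in>E. if fst e = i \<or> snd e = i then f e i else 1)"
    unfolding incident_edges_def using \<open>finite E\<close> by (simp add: prod.inter_filter)
  also have "\<dots> = (\<Prod>e\<in>E. \<Prod>i\<in>V. if fst e = i \<or> snd e = i then f e i else 1)"
    by (rule prod.swap)
  also have "\<dots> = (\<Prod>e\<in>E. \<Prod>i\<in>{fst e, snd e}. f e i)"
  proof (rule prod.cong[OF refl])
    fix e assume "e \<in> E"
    then have "{i \<in> V. fst e = i \<or> snd e = i} = {fst e, snd e}" using E by auto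
    then show "(\<Prod>i\<in>V. if fst e = i \<or> snd e = i then f e i else 1) = (\<Prod>i\<in>{fst e, snd e}. f e i)"
      using prod.inter_filter[OF V, of "f e" "\<lambda>i. fst e = i \<or> snd e = i"] by simp
  qed
  also have "\<dots> = (\<Prod>e\<in>E. f e (fst e) * f e (snd e))"
    using E by (intro prod.cong refl) auto
  finally show ?thesis by simp
qed

definition vertex_coeffs ::
  "('v \<times> 'v) set \<Rightarrow> ('v \<times> 'v \<Rightarrow> 'g \<Rightarrow> complex mat) \<Rightarrow> 'v \<Rightarrow>
     ('v \<times> 'v \<Rightarrow> nat) \<Rightarrow> ('v \<times> 'v \<Rightarrow> nat) \<Rightarrow> 'g \<Rightarrow> complex" where
  "vertex_coeffs E \<rho> i = tensor_coeffs (incident_edges E i)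
     (\<lambda>e p q g. if fst e = i then \<rho> e g $$ (p, q) else cnj (\<rho> e g $$ (p, q)))"

lemma prod_edges_eq_prod_vertex_coeffs:
  assumes "finite V" "E \<subseteq> {(i, j). i \<in> V \<and> j \<in> V \<and> i \<noteq> j}"
  shows "(\<Prod>e\<in>E. \<rho> e (g (fst e)) $$ (a e, b e) * cnj (\<rho> e (g (snd e)) $$ (a e, b e)))
    = (\<Prod>i\<in>V. vertex_coeffs E \<rho> i a b (g i))"
proof -
  let ?f = "\<lambda>e j. if fst e = j then \<rho> e (g j) $$ (a e, b e) else cnj (\<rho> e (g j) $$ (a e, b e))"
  have "(\<Prod>e\<in>E. \<rho> e (g (fst e)) $$ (a e, b e) * cnj (\<rho> e (g (snd e)) $$ (a e, b e)))
      = (\<Prod>e\<in>E. ?f e (fst e) * ?f e (snd e))"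
    using assms(2) by (intro prod.cong refl) auto
  also have "\<dots> = (\<Prod>i\<in>V. \<Prod>e\<in>incident_edges E i. ?f e i)"
    using assms by (rule prod_edges_eq_prod_incident_edges)
  finally show ?thesis by (simp add: vertex_coeffs_def tensor_coeffs_def)
qed

lemma unitary_coeffs_vertex:
  assumes "group G" "finite E" "\<forall>e\<in>E. unitary_rep G T (d e) (\<rho> e)"
  shows "unitary_coeffs G T (PiE (incident_edges E i) (\<lambda>e. {..<d e})) (vertex_coeffs E \<rho> i)"
  unfolding vertex_coeffs_def
proof (rule unitary_coeffs_tensor)
  show "finite (incident_edges E i)" using assms(2) by (simp add: incident_edges_def)
  fix e assume "e \<in> incident_edges E i"
  then have "unitary_coeffs G T {..<d e} (\<lambda>p q g. \<rho> e g $$ (p, q))"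
    using assms(1,3) by (auto simp: incident_edges_def intro: unitary_rep_coeffs)
  then show "unitary_coeffs G T {..<d e}
      (\<lambda>p q g. if fst e = i then \<rho> e g $$ (p, q) else cnj (\<rho> e g $$ (p, q)))"
    by (cases "fst e = i") (simp_all add: unitary_coeffs_cnj)
qed simp

lemma spin_network_integrand_expansion:
  assumes "group G" "finite V" "E \<subseteq> {(i, j). i \<in> V \<and> j \<in> V \<and> i \<noteq> j}"
    and "\<forall>e\<in>E. unitary_rep G T (d e) (\<rho> e)" and "\<And>i. i \<in> V \<Longrightarrow> g i \<in> carrier G"
  shows "(\<Prod>e\<in>E. character (\<rho> e) (g (fst e) \<otimes>\<^bsub>G\<^esub> inv\<^bsub>G\<^esub> (g (snd e))))
    = (\<Sum>a\<in>PiE E (\<lambda>e. {..<d e}). \<Sum>b\<in>PiE E (\<lambda>e. {..<d e}). \<Prod>i\<in>V.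
         vertex_coeffs E \<rho> i (restrict a (incident_edges E i)) (restrict b (incident_edges E i)) (g i))"
proof -
  have "finite E" using assms(2,3) by (rule finite_edges)
  have "(\<Prod>e\<in>E. character (\<rho> e) (g (fst e) \<otimes>\<^bsub>G\<^esub> inv\<^bsub>G\<^esub> (g (snd e))))
    = (\<Prod>e\<in>E. \<Sum>p<d e. \<Sum>q<d e. \<rho> e (g (fst e)) $$ (p, q) * cnj (\<rho> e (g (snd e)) $$ (p, q)))"
    using assms by (intro prod.cong refl character_mult_inv) auto
  also have "\<dots> = (\<Sum>a\<in>PiE E (\<lambda>e. {..<d e}). \<Sum>b\<in>PiE E (\<lambda>e. {..<d e}).
      \<Prod>e\<in>E. \<rho> e (g (fst e)) $$ (a e, b e) * cnj (\<rho> e (g (snd e)) $$ (a e, b e)))"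
    using \<open>finite E\<close> by (simp add: prod_sum_sum_PiE)
  also have "\<dots> = (\<Sum>a\<in>PiE E (\<lambda>e. {..<d e}). \<Sum>b\<in>PiE E (\<lambda>e. {..<d e}). \<Prod>i\<in>V.
      vertex_coeffs E \<rho> i a b (g i))"
    by (intro sum.cong refl prod_edges_eq_prod_vertex_coeffs assms(2,3))
  finally show ?thesis by (simp add: vertex_coeffs_def tensor_coeffs_restrict)
qed

context compact_haar
begin

lemma spin_network_integral_expansion:
  assumes V: "finite V" and E: "E \<subseteq> {(i, j). i \<in> V \<and> j \<in> V \<and> i \<noteq> j}"
    and \<rho>: "\<forall>e\<in>E. unitary_rep G T (d e) (\<rho> e)"
  shows "(\<integral>g. (\<Prod>e\<in>E. character (\<rho> e) (g (fst e) \<otimes>\<^bsub>G\<^esub> inv\<^bsub>G\<^esub> (g (snd e)))) \<partial>PiM V (\<lambda>_. M))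
    = (\<Sum>a\<in>PiE E (\<lambda>e. {..<d e}). \<Sum>b\<in>PiE E (\<lambda>e. {..<d e}). \<Prod>i\<in>V.
         \<integral>h. vertex_coeffs E \<rho> i (restrict a (incident_edges E i)) (restrict b (incident_edges E i)) h \<partial>M)"
proof -
  interpret product_sigma_finite "\<lambda>_. M" by unfold_locales
  let ?A = "PiE E (\<lambda>e. {..<d e})" and ?r = "\<lambda>i a. restrict a (incident_edges E i)"
  have "finite E" using V E by (rule finite_edges)
  have int: "integrable M (vertex_coeffs E \<rho> i (?r i a) (?r i b))" if "a \<in> ?A" "b \<in> ?A" for i a b
    by (rule integrable_continuous_map, rule unitary_coeffs_continuous[OF unitary_coeffs_vertex[OF group
          \<open>finite E\<close> \<rho>] that[THEN restrict_incident_edges_PiE]])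
  have int_prod: "integrable (PiM V (\<lambda>_. M)) (\<lambda>g. \<Prod>i\<in>V. vertex_coeffs E \<rho> i (?r i a) (?r i b) (g i))"
    if "a \<in> ?A" "b \<in> ?A" for a b
    using V int[OF that] by (rule product_integrable_prod)
  have "(\<integral>g. (\<Prod>e\<in>E. character (\<rho> e) (g (fst e) \<otimes>\<^bsub>G\<^esub> inv\<^bsub>G\<^esub> (g (snd e)))) \<partial>PiM V (\<lambda>_. M))
    = (\<integral>g. (\<Sum>a\<in>?A. \<Sum>b\<in>?A. \<Prod>i\<in>V. vertex_coeffs E \<rho> i (?r i a) (?r i b) (g i)) \<partial>PiM V (\<lambda>_. M))"
    by (rule Bochner_Integration.integral_cong[OF refl], rule spin_network_integrand_expansion[OF group V E \<rho>])
      (auto simp: space_PiM space_eq)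
  also have "\<dots> = (\<Sum>a\<in>?A. \<Sum>b\<in>?A.
      \<integral>g. (\<Prod>i\<in>V. vertex_coeffs E \<rho> i (?r i a) (?r i b) (g i)) \<partial>PiM V (\<lambda>_. M))"
  proof -
    have "finite ?A" using \<open>finite E\<close> by (simp add: finite_PiE)
    then show ?thesis
      using int_prod by (simp add: Bochner_Integration.integral_sum Bochner_Integration.integrable_sum)
  qed
  also have "\<dots> = (\<Sum>a\<in>?A. \<Sum>b\<in>?A. \<Prod>i\<in>V. \<integral>h. vertex_coeffs E \<rho> i (?r i a) (?r i b) h \<partial>M)"
  proof (intro sum.cong refl)
    fix a b assume "a \<in> ?A" "b \<in> ?A"
    from V int[OF this] show "(\<integral>g. (\<Prod>i\<in>V. vertex_coeffs E \<rho> i (?r i a) (?r i b) (g i)) \<partial>PiM V (\<lambda>_. M))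
        = (\<Prod>i\<in>V. \<integral>h. vertex_coeffs E \<rho> i (?r i a) (?r i b) h \<partial>M)"
      by (rule product_integral_prod)
  qed
  finally show ?thesis .
qed

end

theorem corollary1:
  fixes G :: "('g, 'b) monoid_scheme" and T :: "'g topology" and M :: "'g measure"
    and k :: nat and E :: "(nat \<times> nat) set"
    and d :: "nat \<times> nat \<Rightarrow> nat" and \<rho> :: "nat \<times> nat \<Rightarrow> 'g \<Rightarrow> complex mat"
  assumes "compact_lie_group G T"
    and "normalized_haar G T M"
    and "E \<subseteq> {(i, j). 1 \<le> i \<and> i < j \<and> j \<le> k}"
    and "\<forall>e\<in>E. unitary_rep G T (d e) (\<rho> e)"
  shows "\<exists>r::real. r \<ge> 0 \<and>
    (\<integral>g. (\<Prod>e\<in>E. character (\<rho> e) (g (fst e) \<otimes>\<^bsub>G\<^esub> inv\<^bsub>G\<^esub> (g (snd e))))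
       \<partial>(PiM {1..k} (\<lambda>_. M))) = complex_of_real r"
proof -
  have "compact_group G T" using assms(1) by (simp add: compact_lie_group_def)
  then interpret compact_haar G T M using assms(2) by unfold_locales
  have V: "finite {1..k}" by simp
  have E: "E \<subseteq> {(i, j). i \<in> {1..k} \<and> j \<in> {1..k} \<and> i \<noteq> j}" using assms(3) by auto
  let ?A = "PiE E (\<lambda>e. {..<d e})" and ?J = "\<lambda>i. PiE (incident_edges E i) (\<lambda>e. {..<d e})"
    and ?r = "\<lambda>i a. restrict a (incident_edges E i)"
    and ?P = "\<lambda>i a b. \<integral>h. vertex_coeffs E \<rho> i a b h \<partial>M"
  let ?S = "\<Sum>\<gamma>\<in>PiE {1..k} ?J. (cmod (\<Sum>a\<in>?A. \<Prod>i\<in>{1..k}. ?P i (\<gamma> i) (?r i a)))\<^sup>2"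
  have "finite E" using V E by (rule finite_edges)
  then have fin: "finite ?A" "\<And>i. finite (?J i)"
    by (simp_all add: finite_PiE incident_edges_def)
  have gram: "?P i (?r i a) (?r i b) = (\<Sum>c\<in>?J i. cnj (?P i c (?r i a)) * ?P i c (?r i b))"
    if "a \<in> ?A" "b \<in> ?A" for i a b
    using fin(2) unitary_coeffs_vertex[OF group \<open>finite E\<close> assms(4)] that[THEN restrict_incident_edges_PiE]
    by (rule unitary_coeffs_integral_gram)
  have "(\<integral>g. (\<Prod>e\<in>E. character (\<rho> e) (g (fst e) \<otimes>\<^bsub>G\<^esub> inv\<^bsub>G\<^esub> (g (snd e)))) \<partial>PiM {1..k} (\<lambda>_. M))
      = (\<Sum>a\<in>?A. \<Sum>b\<in>?A. \<Prod>i\<in>{1..k}. ?P i (?r i a) (?r i b))" (is "?I = _")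
    using V E assms(4) by (rule spin_network_integral_expansion)
  also have "\<dots> = of_real ?S"
    using fin(1) V fin(2) gram by (rule sum_prod_gram_kernels)
  finally have integral_eq: "?I = of_real ?S" .
  show ?thesis
  proof (rule exI[of _ ?S], rule conjI)
    show "?S \<ge> 0" by (intro sum_nonneg zero_le_power2)
  qed (fact integral_eq)
qed

end
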